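(* Let $\mathcal{D}=\mathrm{diag}(u_1,\dots,u_n)$ with all $u_j\neq0$, and let $\mathcal{N}=V_r^{-*}\mathcal{D}^*\mathcal{D}V_r^{-1}$. Then for all integers $\nu_1,\nu_2\ge0$ and every integer $k\ge1$, $$\rho\big(E_{\rm TG}^{\nu_1,\nu_2}(P_\sharp,R_\sharp)\big)=\big\|[E_{\rm TG}^{\nu_1,\nu_2}(P_\sharp,R_\sharp)]^k\big\|_{\mathcal N}^{1/k}=\big\|E_{\rm TG}^{\nu_1,\nu_2}(P_\sharp,R_\sharp)\big\|_{\mathcal N}=\begin{cases}|1-\lambda_{n_c+1}|^{\nu_1+\nu_2},& n_c<n,\\ 0,& n_c=n.\end{cases}$$
   Context: Let $A,M\in\mathbb{C}^{n\times n}$ be nonsingular with $M^{-1}A$ and $M^{-*}A^*$ diagonalizable. Let $V_r=[\bm v_{r,1},\dots,\bm v_{r,n}]$ and $V_l=[\bm v_{l,1},\dots,\bm v_{l,n}]$ be invertible matrices of right and left generalized eigenvectors of the pencil $(A,M)$, i.e. $AV_r=MV_r\Lambda$ and $V_l^*A=\Lambda V_l^*M$ with $\Lambda=\mathrm{diag}(\lambda_1,\dots,\lambda_n)$, chosen so that $V_l^*AV_r$ and $V_l^*MV_r$ are diagonal, and ordered so that $|1-\lambda_1|\ge\cdots\ge|1-\lambda_n|\ge0$. Fix $n_c\in\{1,\dots,n\}$. For $P,R\in\mathbb{C}^{n\times n_c}$ with $R^*AP$ invertible, $\Pi(P,R)=P(R^*AP)^{-1}R^*A$ and $E_{\rm TG}^{\nu_1,\nu_2}(P,R)=(I-M^{-1}A)^{\nu_2}(I-\Pi(P,R))(I-M^{-1}A)^{\nu_1}$.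 $P_\sharp,R_\sharp\in\mathbb{C}^{n\times n_c}$ are any matrices with $\mathrm{range}(P_\sharp)=\mathrm{span}\{\bm v_{r,1},\dots,\bm v_{r,n_c}\}$, $\mathrm{range}(R_\sharp)=\mathrm{span}\{\bm v_{l,1},\dots,\bm v_{l,n_c}\}$. For Hermitian positive definite $\mathcal N$, $\|x\|_{\mathcal N}=(x^*\mathcal Nx)^{1/2}$ and $\|Z\|_{\mathcal N}=\max_{x\neq0}\|Zx\|_{\mathcal N}/\|x\|_{\mathcal N}$; $\rho$ is the spectral radius. *)

theory Defs
  imports "Jordan_Normal_Form.Spectral_Radius"
begin

definition adj :: "complex mat \<Rightarrow> complex mat" where
  "adj Z = mat (dim_col Z) (dim_row Z) (\<lambda>(i,j). cnj (Z $$ (j,i)))"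

text \<open>The inverse of a square matrix (meaningful for invertible matrices).\<close>
definition minv :: "complex mat \<Rightarrow> complex mat" where
  "minv Z = (SOME Y. Y \<in> carrier_mat (dim_row Z) (dim_row Z) \<and>
                     Z * Y = 1\<^sub>m (dim_row Z) \<and> Y * Z = 1\<^sub>m (dim_row Z))"

definition dmat :: "nat \<Rightarrow> (nat \<Rightarrow> complex) \<Rightarrow> complex mat" where
  "dmat n d = mat n n (\<lambda>(i,j). if i = j then d i else 0)"

definition diagonalizable :: "complex mat \<Rightarrow> bool" where
  "diagonalizable Z \<longleftrightarrow> (\<exists>S D. S \<in> carrier_mat (dim_row Z) (dim_row Z) \<and>
      D \<in> carrier_mat (dim_row Z) (dim_row Z) \<and> invertible_mat S \<and> diagonal_mat D \<and>
      Z = S * D * minv S)"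

definition col_range :: "complex mat \<Rightarrow> complex vec set" where
  "col_range P = {P *\<^sub>v x | x. x \<in> carrier_vec (dim_col P)}"

definition span_first_cols :: "complex mat \<Rightarrow> nat \<Rightarrow> complex vec set" where
  "span_first_cols V k = col_range (mat (dim_row V) k (\<lambda>(i,j). V $$ (i,j)))"

definition proj :: "complex mat \<Rightarrow> complex mat \<Rightarrow> complex mat \<Rightarrow> complex mat" where
  "proj A P R = P * minv (adj R * A * P) * adj R * A"

definition E_TG :: "complex mat \<Rightarrow> complex mat \<Rightarrow> nat \<Rightarrow> nat \<Rightarrow> complex mat \<Rightarrow> complex mat \<Rightarrow> complex mat" where
  "E_TG A M nu1 nu2 P R =
     (let n = dim_row A; S = 1\<^sub>m n - minv M * A in
      (S ^\<^sub>m nu2) * (1\<^sub>m n - proj A P R) * (S ^\<^sub>m nu1))"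

definition vnormN :: "complex mat \<Rightarrow> complex vec \<Rightarrow> real" where
  "vnormN N x = sqrt (Re (\<Sum>i<dim_vec x. cnj (x $ i) * (N *\<^sub>v x) $ i))"

definition mnormN :: "complex mat \<Rightarrow> complex mat \<Rightarrow> real" where
  "mnormN N Z = Sup {vnormN N (Z *\<^sub>v x) / vnormN N x | x.
                      x \<in> carrier_vec (dim_col Z) \<and> x \<noteq> 0\<^sub>v (dim_col Z)}"

end

theory Submission
  imports Defs
begin

text \<open>
  Everything is diagonalized by Vr. The right eigenvector relation gives
  I - M^-1 A = Vr (I - Lambda) Vr^-1. The range conditions give P = Vr J X and R = Vl J Y with
  X, Y invertible and J = [I; 0]; such factors cancel in the projection, and since Vl^* A Vr is an
  invertible diagonal matrix, Pi(P, R) = Vr diag(1,...,1,0,...,0) Vr^-1. Hence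
  E = Vr G Vr^-1 with G = diag(0,...,0, (1 - lambda_j)^(nu1+nu2), ...), and rho(E) is the largest
  modulus of a diagonal entry of G. With T = D Vr^-1 we have N = T^* T, and T E T^-1 = G because
  diagonal matrices commute; so the N-norm of E (and of E^k = Vr G^k Vr^-1) is the Euclidean norm
  of a diagonal matrix, i.e. its largest entry in modulus. The ordering of the eigenvalues puts
  that entry at index nc (indices start at 0 here), or makes it 0 when nc = n.
\<close>

lemma assoc_mult_mat_dim:
  "dim_col A = dim_row B \<Longrightarrow> dim_col B = dim_row C \<Longrightarrow>
   A * B * C = A * (B * (C :: 'a :: semiring_0 mat))"
  by (rule assoc_mult_mat[of _ "dim_row A" "dim_row B" _ "dim_row C" _ "dim_col C"]) auto

lemma mult_cancel_left_dim:
  assumes "W * V = 1\<^sub>m n" "dim_col W = dim_row V" "dim_row X = n"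
  shows "W * (V * (X :: 'a :: semiring_1 mat)) = X"
proof -
  have "dim_col V = dim_row X" using assms by (metis index_mult_mat(3) index_one_mat(3))
  then have "W * (V * X) = (W * V) * X" using assms(2) by (simp add: assoc_mult_mat_dim)
  then show ?thesis using assms by simp
qed

lemma mult_mat_vec_zero [simp]: "A \<in> carrier_mat n m \<Longrightarrow> A *\<^sub>v 0\<^sub>v m = 0\<^sub>v n"
  by (rule eq_vecI) auto

lemma col_eq_mult_unit_vec:
  assumes "(A :: 'a :: semiring_1 mat) \<in> carrier_mat n m" "j < m"
  shows "col A j = A *\<^sub>v unit_vec m j"
  by (rule eq_vecI) (use assms in auto)

text \<open>For m < n, diag_rect n m (\<lambda>_. 1) is the embedding [I; 0] of the first m coordinates.\<close>

definition diag_rect :: "nat \<Rightarrow> nat \<Rightarrow> (nat \<Rightarrow> 'a :: zero) \<Rightarrow> 'a mat" where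
  "diag_rect n m f = mat n m (\<lambda>(i,j). if i = j then f j else 0)"

lemma diag_rect_carrier [simp]: "diag_rect n m f \<in> carrier_mat n m"
  and diag_rect_dim [simp]: "dim_row (diag_rect n m f) = n" "dim_col (diag_rect n m f) = m"
  and diag_rect_index [simp]:
    "i < n \<Longrightarrow> j < m \<Longrightarrow> diag_rect n m f $$ (i,j) = (if i = j then f j else 0)"
  by (auto simp: diag_rect_def)

lemma dmat_eq_diag_rect: "dmat n f = diag_rect n n f"
  by (rule eq_matI) (auto simp: dmat_def)

lemma one_mat_eq_diag_rect: "1\<^sub>m n = diag_rect n n (\<lambda>_. 1)"
  by (rule eq_matI) auto

lemma diag_rect_cong:
  "(\<And>j. j < n \<Longrightarrow> j < m \<Longrightarrow> f j = g j) \<Longrightarrow> diag_rect n m f = diag_rect n m g"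
  by (rule eq_matI) auto

lemma mult_diag_rect_index:
  assumes "(A :: 'a :: semiring_0 mat) \<in> carrier_mat n m" "i < n" "j < p"
  shows "(A * diag_rect m p f) $$ (i,j) = (if j < m then A $$ (i,j) * f j else 0)"
proof -
  have "(A * diag_rect m p f) $$ (i,j) = (\<Sum>k<m. A $$ (i,k) * (if k = j then f j else 0))"
    using assms by (simp add: scalar_prod_def atLeast0LessThan)
  also have "\<dots> = (\<Sum>k<m. if k = j then A $$ (i,j) * f j else 0)"
    by (rule sum.cong) auto
  finally show ?thesis by simp
qed

lemma diag_rect_mult_index:
  assumes "(A :: 'a :: semiring_0 mat) \<in> carrier_mat m p" "i < n" "j < p"
  shows "(diag_rect n m f * A) $$ (i,j) = (if i < m then f i * A $$ (i,j) else 0)"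
proof -
  have "(diag_rect n m f * A) $$ (i,j) = (\<Sum>k<m. (if i = k then f k else 0) * A $$ (k,j))"
    using assms by (simp add: scalar_prod_def atLeast0LessThan)
  also have "\<dots> = (\<Sum>k<m. if k = i then f i * A $$ (i,j) else 0)"
    by (rule sum.cong) auto
  finally show ?thesis by simp
qed

lemma diag_rect_mult_vec_index:
  assumes "y \<in> carrier_vec n" "i < n"
  shows "(diag_rect n n g *\<^sub>v y) $ i = g i * y $ i"
proof -
  have "(diag_rect n n g *\<^sub>v y) $ i = (\<Sum>k<n. (if i = k then g k else 0) * y $ k)"
    using assms by (simp add: scalar_prod_def atLeast0LessThan)
  also have "\<dots> = (\<Sum>k<n. if k = i then g i * y $ i else 0)"
    by (rule sum.cong) auto
  finally show ?thesis using assms(2) by simp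
qed

lemma diag_rect_mult:
  "diag_rect n m f * diag_rect m p (g :: nat \<Rightarrow> 'a :: semiring_0) =
   diag_rect n p (\<lambda>j. if j < m then f j * g j else 0)"
proof (rule eq_matI)
  fix i j assume "i < dim_row (diag_rect n p (\<lambda>j. if j < m then f j * g j else 0))"
    "j < dim_col (diag_rect n p (\<lambda>j. if j < m then f j * g j else 0))"
  then show "(diag_rect n m f * diag_rect m p g) $$ (i,j) =
      diag_rect n p (\<lambda>j. if j < m then f j * g j else 0) $$ (i,j)"
    by (subst diag_rect_mult_index[OF diag_rect_carrier]) auto
qed auto

lemma diag_rect_minus:
  "diag_rect n n (f :: nat \<Rightarrow> 'a :: group_add) - diag_rect n n g = diag_rect n n (\<lambda>j. f j - g j)"
  by (rule eq_matI) auto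

lemma diag_rect_pow:
  "diag_rect n n (f :: nat \<Rightarrow> 'a :: semiring_1) ^\<^sub>m k = diag_rect n n (\<lambda>j. f j ^ k)"
proof (induction k)
  case 0
  show ?case by (simp add: one_mat_eq_diag_rect)
next
  case (Suc k)
  then show ?case by (simp add: diag_rect_mult) (rule diag_rect_cong, simp add: power_commutes)
qed

lemma diagonal_mat_eq_diag_rect:
  assumes "D \<in> carrier_mat n n" "diagonal_mat D"
  shows "D = diag_rect n n (\<lambda>j. D $$ (j,j))"
  by (rule eq_matI) (use assms in \<open>auto simp: diagonal_mat_def\<close>)

lemma diag_rect_right_inverse_nonzero:
  assumes "diag_rect n n d * Z = 1\<^sub>m n" "(Z :: 'a :: semiring_1 mat) \<in> carrier_mat n n" "j < n"
  shows "d j \<noteq> 0"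
proof
  assume "d j = 0"
  then have "(diag_rect n n d * Z) $$ (j,j) = 0"
    using assms(2,3) by (subst diag_rect_mult_index) auto
  then show False using assms(1,3) by simp
qed

lemma spectrum_diag_rect: "spectrum (diag_rect n n (f :: nat \<Rightarrow> 'a :: field)) = f ` {..<n}"
proof -
  have "char_poly (diag_rect n n f) = (\<Prod>a \<leftarrow> diag_mat (diag_rect n n f). [:- a, 1:])"
    by (rule char_poly_upper_triangular[OF diag_rect_carrier]) auto
  also have "diag_mat (diag_rect n n f) = map f [0..<n]"
    unfolding diag_mat_def by (auto intro: map_cong)
  finally have "char_poly (diag_rect n n f) = (\<Prod>a \<leftarrow> map f [0..<n]. [:- a, 1:])" .
  then show ?thesis
    unfolding spectrum_root_char_poly[OF diag_rect_carrier]
    by (auto simp: poly_prod_list prod_list_zero_iff)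
qed

lemma adj_carrier [simp]: "adj Z \<in> carrier_mat (dim_col Z) (dim_row Z)"
  and adj_dim [simp]: "dim_row (adj Z) = dim_col Z" "dim_col (adj Z) = dim_row Z"
  and adj_index [simp]:
    "i < dim_col Z \<Longrightarrow> j < dim_row Z \<Longrightarrow> adj Z $$ (i,j) = cnj (Z $$ (j,i))"
  by (auto simp: adj_def)

lemma adj_mult:
  assumes "A \<in> carrier_mat n m" "B \<in> carrier_mat m p"
  shows "adj (A * B) = adj B * adj A"
  by (rule eq_matI) (use assms in \<open>auto simp: scalar_prod_def mult.commute\<close>)

lemma adj_one [simp]: "adj (1\<^sub>m n) = 1\<^sub>m n"
  by (rule eq_matI) auto

lemma adj_diag_rect [simp]: "adj (diag_rect n m f) = diag_rect m n (\<lambda>j. cnj (f j))"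
  by (rule eq_matI) auto

lemma minv_eqI:
  assumes Z: "Z \<in> carrier_mat n n" and Y: "Y \<in> carrier_mat n n" and ZY: "Z * Y = 1\<^sub>m n"
  shows "minv Z = Y"
proof -
  have YZ: "Y * Z = 1\<^sub>m n" by (rule mat_mult_left_right_inverse[OF Z Y ZY])
  let ?inv = "\<lambda>Y. Y \<in> carrier_mat n n \<and> Z * Y = 1\<^sub>m n \<and> Y * Z = 1\<^sub>m n"
  have "?inv (minv Z)"
    unfolding minv_def using someI[of ?inv Y] Z Y ZY YZ by auto
  then have "minv Z = minv Z * (Z * Y)" using ZY by auto
  also have "\<dots> = Y"
    using \<open>?inv (minv Z)\<close> Z Y by (simp add: assoc_mult_mat[of _ n n _ n _ n, symmetric])
  finally show ?thesis .
qed

lemma invertible_minv: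
  assumes Z: "Z \<in> carrier_mat n n" and "invertible_mat Z"
  shows "minv Z \<in> carrier_mat n n" "Z * minv Z = 1\<^sub>m n" "minv Z * Z = 1\<^sub>m n"
proof -
  obtain Y where ZY: "Z * Y = 1\<^sub>m n" and YZ: "Y * Z = 1\<^sub>m (dim_row Y)"
    using assms unfolding invertible_mat_def inverts_mat_def by auto
  then have Y: "Y \<in> carrier_mat n n"
    using Z by (metis carrier_matD carrier_matI index_mult_mat(2,3) index_one_mat(2,3))
  show "minv Z \<in> carrier_mat n n" "Z * minv Z = 1\<^sub>m n" "minv Z * Z = 1\<^sub>m n"
    using minv_eqI[OF Z Y ZY] mat_mult_left_right_inverse[OF Z Y ZY] Y ZY by auto
qed

section \<open>Diagonalizing the two-grid error matrix\<close>

lemma similar_mat_wit_carrier: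
  "similar_mat_wit A B P Q \<Longrightarrow> B \<in> carrier_mat n n \<Longrightarrow> A \<in> carrier_mat n n"
  using similar_mat_witD2(5)[OF _ similar_mat_wit_sym] by blast

lemma similar_mat_wit_mult:
  assumes "similar_mat_wit A B P Q" "similar_mat_wit A' B' P Q"
  shows "similar_mat_wit (A * A') (B * B') P Q"
proof -
  define n where "n = dim_row A"
  note AB = similar_mat_witD[OF n_def assms(1)]
  have "P \<in> carrier_mat (dim_row A') (dim_row A')"
    by (rule similar_mat_witD(6)[OF refl assms(2)])
  then have "dim_row A' = n" using AB(6) by (metis carrier_matD(1))
  note AB' = similar_mat_witD[OF this[symmetric] assms(2)]
  have "A * A' = P * B * (Q * P) * B' * Q"
    unfolding AB(3) AB'(3) using AB(5-7) AB'(5) by (simp add: assoc_mult_mat[of _ n n _ n _ n])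
  also have "\<dots> = P * (B * B') * Q"
    unfolding AB(2) using AB(5-7) AB'(5) by (simp add: assoc_mult_mat[of _ n n _ n _ n])
  finally show ?thesis
    using AB AB' by (intro similar_mat_witI[of _ _ n]) auto
qed

lemma similar_mat_wit_one_minus:
  fixes A :: "'a :: comm_ring_1 mat"
  assumes "similar_mat_wit A B P Q" "A \<in> carrier_mat n n"
  shows "similar_mat_wit (1\<^sub>m n - A) (1\<^sub>m n - B) P Q"
proof -
  note AB = similar_mat_witD2[OF assms(2,1)]
  have "P * (1\<^sub>m n - B) * Q = (P - P * B) * Q"
    using AB(5,6) by (simp add: mult_minus_distrib_mat[OF AB(6) one_carrier_mat AB(5)])
  also have "\<dots> = 1\<^sub>m n - A"
    unfolding AB(3) using AB(1,5-7) by (simp add: minus_mult_distrib_mat[of _ n n])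
  finally show ?thesis
    using AB by (intro similar_mat_witI[of _ _ n]) auto
qed

lemma similar_mat_wit_minv_mult:
  assumes A: "A \<in> carrier_mat n n" and M: "M \<in> carrier_mat n n" and "invertible_mat M"
    and V: "V \<in> carrier_mat n n" and W: "W \<in> carrier_mat n n"
    and VW: "V * W = 1\<^sub>m n" and WV: "W * V = 1\<^sub>m n"
    and D: "D \<in> carrier_mat n n" and eig: "A * V = M * V * D"
  shows "similar_mat_wit (minv M * A) D V W"
proof -
  note Mi = invertible_minv[OF M \<open>invertible_mat M\<close>]
  have "minv M * A = minv M * (A * V) * W"
    using A V W Mi(1) VW by (simp add: assoc_mult_mat[of _ n n _ n _ n])
  also have "\<dots> = (minv M * M) * V * D * W"
    unfolding eig using M V D W Mi(1) by (simp add: assoc_mult_mat[of _ n n _ n _ n])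
  also have "\<dots> = V * D * W" using V unfolding Mi(3) by simp
  finally show ?thesis
    using A V W D Mi(1) VW WV by (intro similar_mat_witI[of _ _ n]) auto
qed

lemma spectral_radius_similar_diag_rect:
  assumes "similar_mat_wit E (diag_rect n n g) P Q"
  shows "spectral_radius E = Max ((\<lambda>j. cmod (g j)) ` {..<n})"
proof -
  have "similar_mat E (diag_rect n n g)"
    using assms unfolding similar_mat_def by blast
  moreover have "E \<in> carrier_mat n n"
    by (rule similar_mat_wit_carrier[OF assms diag_rect_carrier])
  ultimately have "spectrum E = spectrum (diag_rect n n g)"
    by (simp add: spectrum_root_char_poly spectrum_root_char_poly[OF diag_rect_carrier] char_poly_similar)
  then show ?thesis
    unfolding spectral_radius_def spectrum_diag_rect by (simp add: image_image)
qed

lemma col_range_subset_imp_factor: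
  assumes A: "A \<in> carrier_mat n m" and B: "B \<in> carrier_mat n p"
    and sub: "col_range A \<subseteq> col_range B"
  shows "\<exists>X \<in> carrier_mat p m. A = B * X"
proof -
  have "\<exists>x \<in> carrier_vec p. col A j = B *\<^sub>v x" if j: "j < m" for j
  proof -
    have "col A j \<in> col_range A"
      unfolding col_range_def col_eq_mult_unit_vec[OF A j] using A by auto
    then show ?thesis using sub B unfolding col_range_def by auto
  qed
  then obtain x where x: "\<And>j. j < m \<Longrightarrow> x j \<in> carrier_vec p \<and> col A j = B *\<^sub>v x j"
    by metis
  define X where "X = mat_of_cols p (map x [0..<m])"
  have X: "X \<in> carrier_mat p m"
    unfolding X_def by (metis length_map length_upt minus_nat.diff_0 mat_of_cols_carrier(1))
  have "A = B * X"
  proof (rule mat_col_eqI)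
    fix j assume "j < dim_col (B * X)"
    then have j: "j < m" using X by simp
    have "col (B * X) j = B *\<^sub>v x j"
      using B X j x[OF j] unfolding X_def by (subst col_mult2) auto
    then show "col A j = col (B * X) j" using x[OF j] by simp
  qed (use A B X in auto)
  then show ?thesis using X by blast
qed

lemma col_range_eq_imp_invertible_factor:
  assumes P: "P \<in> carrier_mat n m" and B: "B \<in> carrier_mat n m"
    and B': "B' \<in> carrier_mat m n" and B'B: "B' * B = 1\<^sub>m m"
    and range: "col_range P = col_range B"
  obtains X X' where "X \<in> carrier_mat m m" "X' \<in> carrier_mat m m" "P = B * X" "X * X' = 1\<^sub>m m"
proof -
  obtain X where X: "X \<in> carrier_mat m m" "P = B * X"
    using col_range_subset_imp_factor[OF P B] range by auto
  obtain X' where X': "X' \<in> carrier_mat m m" "B = P * X'"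
    using col_range_subset_imp_factor[OF B P] range by auto
  have "X * X' = B' * B * X * X'"
    using X(1) unfolding B'B by simp
  also have "\<dots> = B' * (B * X) * X'"
    using assoc_mult_mat[OF B' B X(1)] by simp
  also have "\<dots> = B' * (B * X * X')"
    using assoc_mult_mat[OF B' mult_carrier_mat[OF B X(1)] X'(1)] .
  also have "\<dots> = 1\<^sub>m m"
    unfolding X(2)[symmetric] X'(2)[symmetric] by (rule B'B)
  finally show ?thesis using that X X' by blast
qed

lemma span_first_cols_eq_col_range:
  assumes V: "V \<in> carrier_mat n n" and "m \<le> n"
  shows "span_first_cols V m = col_range (V * diag_rect n m (\<lambda>_. 1))"
proof -
  have "mat (dim_row V) m (\<lambda>(i,j). V $$ (i,j)) = V * diag_rect n m (\<lambda>_. 1)"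
  proof (rule eq_matI)
    fix i j
    assume "i < dim_row (V * diag_rect n m (\<lambda>_. 1))" "j < dim_col (V * diag_rect n m (\<lambda>_. 1))"
    then show "mat (dim_row V) m (\<lambda>(i,j). V $$ (i,j)) $$ (i,j) =
               (V * diag_rect n m (\<lambda>_. 1)) $$ (i,j)"
      using assms by (subst mult_diag_rect_index[OF V]) auto
  qed (use V in auto)
  then show ?thesis unfolding span_first_cols_def by simp
qed

lemma proj_mult_invertible_right:
  assumes A: "A \<in> carrier_mat n n" and B: "B \<in> carrier_mat n m" and C: "C \<in> carrier_mat n m"
    and X: "X \<in> carrier_mat m m" "X' \<in> carrier_mat m m" "X * X' = 1\<^sub>m m"
    and Y: "Y \<in> carrier_mat m m" "Y' \<in> carrier_mat m m" "Y * Y' = 1\<^sub>m m"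
    and K: "Ki \<in> carrier_mat m m" "adj C * A * B * Ki = 1\<^sub>m m"
  shows "proj A (B * X) (C * Y) = proj A B C"
proof -
  have Y'Y: "Y' * Y = 1\<^sub>m m" by (rule mat_mult_left_right_inverse[OF Y])
  have adjY: "adj Y * adj Y' = 1\<^sub>m m" "adj Y' * adj Y = 1\<^sub>m m"
    unfolding adj_mult[OF Y(2,1), symmetric] adj_mult[OF Y(1,2), symmetric] Y'Y Y(3) by simp_all
  have dims: "dim_row A = n" "dim_col A = n" "dim_row B = n" "dim_col B = m"
    "dim_row C = n" "dim_col C = m" "dim_row X = m" "dim_col X = m" "dim_row X' = m" "dim_col X' = m"
    "dim_row Y = m" "dim_col Y = m" "dim_row Y' = m" "dim_col Y' = m" "dim_row Ki = m" "dim_col Ki = m"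
    using A B C X Y K by auto
  have minvK: "minv (adj C * A * B) = Ki"
    by (rule minv_eqI[OF _ K]) (use dims in auto)
  have "adj (C * Y) * A * (B * X) * (X' * Ki * adj Y') = adj Y * (adj C * A * B * Ki * adj Y')"
    unfolding adj_mult[OF C Y(1)] using dims X(3)
    by (simp add: assoc_mult_mat_dim mult_cancel_left_dim)
  also have "\<dots> = 1\<^sub>m m" unfolding K(2) using adjY dims by simp
  finally have "minv (adj (C * Y) * A * (B * X)) = X' * Ki * adj Y'"
    by (intro minv_eqI) (use dims in auto)
  then have "proj A (B * X) (C * Y) = B * (X * (X' * (Ki * (adj Y' * (adj Y * (adj C * A))))))"
    unfolding proj_def adj_mult[OF C Y(1)] using dims by (simp add: assoc_mult_mat_dim)
  also have "\<dots> = B * Ki * adj C * A"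
    using X(3) adjY(2) dims by (simp add: mult_cancel_left_dim assoc_mult_mat_dim)
  finally show ?thesis unfolding proj_def minvK .
qed

lemma proj_leading_eigenvectors:
  fixes d :: "nat \<Rightarrow> complex"
  assumes A: "A \<in> carrier_mat n n" and Vr: "Vr \<in> carrier_mat n n" and Vl: "Vl \<in> carrier_mat n n"
    and W: "W \<in> carrier_mat n n" and VrW: "Vr * W = 1\<^sub>m n"
    and diag: "adj Vl * A * Vr = diag_rect n n d" and d: "\<And>j. j < m \<Longrightarrow> d j \<noteq> 0"
    and "m \<le> n"
  shows "adj (Vl * diag_rect n m (\<lambda>_. 1)) * A * (Vr * diag_rect n m (\<lambda>_. 1)) *
           diag_rect m m (\<lambda>j. 1 / d j) = 1\<^sub>m m"
    and "proj A (Vr * diag_rect n m (\<lambda>_. 1)) (Vl * diag_rect n m (\<lambda>_. 1)) =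
           Vr * diag_rect n n (\<lambda>j. if j < m then 1 else 0) * W"
proof -
  let ?I = "diag_rect n m (\<lambda>_. 1 :: complex)" and ?Ii = "diag_rect m n (\<lambda>_. 1 :: complex)"
  let ?Dm = "diag_rect m m d" and ?Dmi = "diag_rect m m (\<lambda>j. 1 / d j)"
  have dims: "dim_row A = n" "dim_col A = n" "dim_row Vr = n" "dim_col Vr = n"
    "dim_row Vl = n" "dim_col Vl = n" "dim_row W = n" "dim_col W = n"
    using A Vr Vl W by auto
  have adjI: "adj (Vl * ?I) = ?Ii * adj Vl"
    using adj_mult[OF Vl diag_rect_carrier] by simp
  have "adj (Vl * ?I) * A * (Vr * ?I) = ?Ii * (adj Vl * A * Vr) * ?I"
    unfolding adjI using dims by (simp add: assoc_mult_mat_dim)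
  also have "\<dots> = ?Dm"
    unfolding diag diag_rect_mult using \<open>m \<le> n\<close> by (intro diag_rect_cong) auto
  finally have coarse: "adj (Vl * ?I) * A * (Vr * ?I) = ?Dm" .
  have "?Dm * ?Dmi = 1\<^sub>m m"
    unfolding diag_rect_mult one_mat_eq_diag_rect using d by (intro diag_rect_cong) auto
  then show "adj (Vl * ?I) * A * (Vr * ?I) * ?Dmi = 1\<^sub>m m" unfolding coarse .
  then have minv: "minv (adj (Vl * ?I) * A * (Vr * ?I)) = ?Dmi"
    by (intro minv_eqI) (use dims in auto)
  have "adj Vl * A = adj Vl * A * (Vr * W)" using dims by (simp add: VrW)
  also have "\<dots> = diag_rect n n d * W"
    unfolding diag[symmetric] using dims by (simp add: assoc_mult_mat_dim)
  finally have adjVlA: "adj Vl * A = diag_rect n n d * W" .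
  have "proj A (Vr * ?I) (Vl * ?I) = Vr * (?I * (?Dmi * (?Ii * (adj Vl * A))))"
    unfolding proj_def minv unfolding adjI using dims by (simp add: assoc_mult_mat_dim)
  also have "\<dots> = Vr * (?I * ?Dmi * ?Ii * diag_rect n n d) * W"
    unfolding adjVlA using dims by (simp add: assoc_mult_mat_dim)
  also have "?I * ?Dmi * ?Ii * diag_rect n n d = diag_rect n n (\<lambda>j. if j < m then 1 else 0)"
    unfolding diag_rect_mult using d \<open>m \<le> n\<close> by (intro diag_rect_cong) auto
  finally show "proj A (Vr * ?I) (Vl * ?I) = Vr * diag_rect n n (\<lambda>j. if j < m then 1 else 0) * W" .
qed

lemma diagonal_mat_triple_product:
  fixes A Vr Vl W :: "complex mat"
  assumes A: "A \<in> carrier_mat n n" "invertible_mat A"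
    and Vr: "Vr \<in> carrier_mat n n" and W: "W \<in> carrier_mat n n" and VrW: "Vr * W = 1\<^sub>m n"
    and Vl: "Vl \<in> carrier_mat n n" "invertible_mat Vl"
    and diag: "diagonal_mat (adj Vl * A * Vr)"
  obtains d where "adj Vl * A * Vr = diag_rect n n d" "\<And>j. j < n \<Longrightarrow> d j \<noteq> 0"
proof -
  define d where "d j = (adj Vl * A * Vr) $$ (j,j)" for j
  note Ai = invertible_minv[OF A] and Vli = invertible_minv[OF Vl]
  have dims: "dim_row A = n" "dim_col A = n" "dim_row Vr = n" "dim_col Vr = n"
    "dim_row Vl = n" "dim_col Vl = n" "dim_row W = n" "dim_col W = n"
    "dim_row (minv A) = n" "dim_col (minv A) = n" "dim_row (minv Vl) = n" "dim_col (minv Vl) = n"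
    using A Vr Vl W Ai Vli by auto
  have Delta: "adj Vl * A * Vr = diag_rect n n d"
    unfolding d_def by (rule diagonal_mat_eq_diag_rect[OF _ diag]) (use dims in auto)
  have "adj Vl * A * Vr * (W * (minv A * adj (minv Vl))) = adj Vl * adj (minv Vl)"
    using dims Ai(2) VrW by (simp add: assoc_mult_mat_dim mult_cancel_left_dim)
  also have "\<dots> = 1\<^sub>m n"
    unfolding adj_mult[OF Vli(1) Vl(1), symmetric] Vli(3) by simp
  finally have "\<And>j. j < n \<Longrightarrow> d j \<noteq> 0"
    unfolding Delta by (rule diag_rect_right_inverse_nonzero) (use dims in auto)
  with Delta show ?thesis using that by blast
qed

lemma similar_mat_wit_proj:
  fixes A Vr Vl W P R :: "complex mat"
  assumes A: "A \<in> carrier_mat n n" "invertible_mat A"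
    and Vr: "Vr \<in> carrier_mat n n" and W: "W \<in> carrier_mat n n"
    and VrW: "Vr * W = 1\<^sub>m n" and WVr: "W * Vr = 1\<^sub>m n"
    and Vl: "Vl \<in> carrier_mat n n" "invertible_mat Vl"
    and diag: "diagonal_mat (adj Vl * A * Vr)" and "m \<le> n"
    and P: "P \<in> carrier_mat n m" "col_range P = span_first_cols Vr m"
    and R: "R \<in> carrier_mat n m" "col_range R = span_first_cols Vl m"
  shows "similar_mat_wit (proj A P R) (diag_rect n n (\<lambda>j. if j < m then 1 else 0)) Vr W"
proof -
  let ?I = "diag_rect n m (\<lambda>_. 1 :: complex)" and ?Ii = "diag_rect m n (\<lambda>_. 1 :: complex)"
  obtain d where Delta: "adj Vl * A * Vr = diag_rect n n d" and d: "\<And>j. j < n \<Longrightarrow> d j \<noteq> 0"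
    using diagonal_mat_triple_product[OF A Vr W VrW Vl diag] by blast
  have "\<And>j. j < m \<Longrightarrow> d j \<noteq> 0" using d \<open>m \<le> n\<close> by simp
  note leading = proj_leading_eigenvectors[OF A(1) Vr Vl(1) W VrW Delta this \<open>m \<le> n\<close>]
  note Vli = invertible_minv[OF Vl]
  have dims: "dim_row Vr = n" "dim_col Vr = n" "dim_row Vl = n" "dim_col Vl = n"
    "dim_row W = n" "dim_col W = n" "dim_row (minv Vl) = n" "dim_col (minv Vl) = n"
    using Vr Vl W Vli by auto
  have IiI: "?Ii * ?I = 1\<^sub>m m"
    unfolding diag_rect_mult one_mat_eq_diag_rect using \<open>m \<le> n\<close> by (intro diag_rect_cong) auto
  have "?Ii * W * (Vr * ?I) = 1\<^sub>m m"
    using dims WVr IiI by (simp add: assoc_mult_mat_dim mult_cancel_left_dim)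
  then obtain X X' where X: "X \<in> carrier_mat m m" "X' \<in> carrier_mat m m"
      "P = Vr * ?I * X" "X * X' = 1\<^sub>m m"
    using col_range_eq_imp_invertible_factor[OF P(1) _ _ _
        P(2)[unfolded span_first_cols_eq_col_range[OF Vr \<open>m \<le> n\<close>]]] Vr W
    by (metis diag_rect_carrier mult_carrier_mat)
  have "?Ii * minv Vl * (Vl * ?I) = 1\<^sub>m m"
    using dims Vli(3) IiI by (simp add: assoc_mult_mat_dim mult_cancel_left_dim)
  then obtain Y Y' where Y: "Y \<in> carrier_mat m m" "Y' \<in> carrier_mat m m"
      "R = Vl * ?I * Y" "Y * Y' = 1\<^sub>m m"
    using col_range_eq_imp_invertible_factor[OF R(1) _ _ _
        R(2)[unfolded span_first_cols_eq_col_range[OF Vl(1) \<open>m \<le> n\<close>]]] Vl(1) Vli(1)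
    by (metis diag_rect_carrier mult_carrier_mat)
  have "proj A P R = proj A (Vr * ?I) (Vl * ?I)"
    unfolding X(3) Y(3) using A(1) Vr Vl(1) X Y leading(1)
    by (intro proj_mult_invertible_right[of _ n _ m]) auto
  also have "\<dots> = Vr * diag_rect n n (\<lambda>j. if j < m then 1 else 0) * W"
    by (rule leading(2))
  finally show ?thesis
    using Vr W VrW WVr A(1) P(1) R(1) by (intro similar_mat_witI[of _ _ n]) (auto simp: proj_def)
qed

lemma similar_mat_wit_E_TG:
  fixes A M Vr Vl W P R :: "complex mat"
  assumes A: "A \<in> carrier_mat n n" "invertible_mat A" and M: "M \<in> carrier_mat n n" "invertible_mat M"
    and Vr: "Vr \<in> carrier_mat n n" and W: "W \<in> carrier_mat n n"
    and VrW: "Vr * W = 1\<^sub>m n" and WVr: "W * Vr = 1\<^sub>m n"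
    and Vl: "Vl \<in> carrier_mat n n" "invertible_mat Vl"
    and eig: "A * Vr = M * Vr * dmat n lam" and diag: "diagonal_mat (adj Vl * A * Vr)" and "m \<le> n"
    and P: "P \<in> carrier_mat n m" "col_range P = span_first_cols Vr m"
    and R: "R \<in> carrier_mat n m" "col_range R = span_first_cols Vl m"
  shows "similar_mat_wit (E_TG A M nu1 nu2 P R)
           (diag_rect n n (\<lambda>j. if j < m then 0 else (1 - lam j) ^ (nu1 + nu2))) Vr W"
proof -
  have "similar_mat_wit (1\<^sub>m n - minv M * A) (1\<^sub>m n - diag_rect n n lam) Vr W"
    using similar_mat_wit_minv_mult[OF A(1) M Vr W VrW WVr diag_rect_carrier eig[unfolded dmat_eq_diag_rect]]
      A(1) M by (intro similar_mat_wit_one_minus) (auto dest: invertible_minv)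
  then have S: "similar_mat_wit (1\<^sub>m n - minv M * A) (diag_rect n n (\<lambda>j. 1 - lam j)) Vr W"
    unfolding one_mat_eq_diag_rect diag_rect_minus .
  have "similar_mat_wit (1\<^sub>m n - proj A P R)
          (1\<^sub>m n - diag_rect n n (\<lambda>j. if j < m then 1 else 0)) Vr W"
    using similar_mat_wit_proj[OF A Vr W VrW WVr Vl diag \<open>m \<le> n\<close> P R] A(1) P(1) R(1)
    by (intro similar_mat_wit_one_minus) (auto simp: proj_def)
  moreover have "1\<^sub>m n - diag_rect n n (\<lambda>j. if j < m then 1 else 0) =
                 diag_rect n n (\<lambda>j. if j < m then 0 else 1 :: complex)"
    unfolding one_mat_eq_diag_rect diag_rect_minus by (intro diag_rect_cong) simp
  ultimately have Pi:
    "similar_mat_wit (1\<^sub>m n - proj A P R) (diag_rect n n (\<lambda>j. if j < m then 0 else 1)) Vr W"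
    by simp
  have "similar_mat_wit (E_TG A M nu1 nu2 P R)
          (diag_rect n n (\<lambda>j. (1 - lam j) ^ nu2) * diag_rect n n (\<lambda>j. if j < m then 0 else 1) *
           diag_rect n n (\<lambda>j. (1 - lam j) ^ nu1)) Vr W"
    unfolding E_TG_def Let_def carrier_matD(1)[OF A(1)] diag_rect_pow[symmetric]
    by (intro similar_mat_wit_mult similar_mat_wit_pow S Pi)
  also have "diag_rect n n (\<lambda>j. (1 - lam j) ^ nu2) * diag_rect n n (\<lambda>j. if j < m then 0 else 1) *
             diag_rect n n (\<lambda>j. (1 - lam j) ^ nu1) =
             diag_rect n n (\<lambda>j. if j < m then 0 else (1 - lam j) ^ (nu1 + nu2))"
    unfolding diag_rect_mult by (intro diag_rect_cong) (simp add: power_add mult.commute)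
  finally show ?thesis .
qed

lemma Max_cmod_tail_powers:
  fixes lam :: "nat \<Rightarrow> complex"
  assumes order: "\<And>i j. i \<le> j \<Longrightarrow> j < n \<Longrightarrow> cmod (1 - lam j) \<le> cmod (1 - lam i)"
    and "0 < n" "m \<le> n"
  shows "Max ((\<lambda>j. cmod (if j < m then 0 else (1 - lam j) ^ p)) ` {..<n}) =
         (if m < n then cmod (1 - lam m) ^ p else 0)"
proof (rule Max_eqI)
  fix y assume "y \<in> (\<lambda>j. cmod (if j < m then 0 else (1 - lam j) ^ p)) ` {..<n}"
  then obtain j where j: "j < n" "y = cmod (if j < m then 0 else (1 - lam j) ^ p)" by blast
  show "y \<le> (if m < n then cmod (1 - lam m) ^ p else 0)"
  proof (cases "j < m")
    case False
    then have "cmod (1 - lam j) ^ p \<le> cmod (1 - lam m) ^ p"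
      using order[of m j] j(1) by (intro power_mono) auto
    then show ?thesis using j False by (simp add: norm_power)
  qed (use j in simp)
next
  show "(if m < n then cmod (1 - lam m) ^ p else 0) \<in>
        (\<lambda>j. cmod (if j < m then 0 else (1 - lam j) ^ p)) ` {..<n}"
    using assms(2,3) by (cases "m < n") (force simp: norm_power, force)
qed simp

section \<open>The N-norm\<close>

definition sq_norm_vec :: "complex vec \<Rightarrow> real" where
  "sq_norm_vec y = (\<Sum>i<dim_vec y. (cmod (y $ i))\<^sup>2)"

lemma sq_norm_vec_pos:
  assumes "y \<in> carrier_vec n" "y \<noteq> 0\<^sub>v n"
  shows "0 < sq_norm_vec y"
proof -
  obtain j where j: "j < n" "y $ j \<noteq> 0"
    using assms by (metis carrier_vecD eq_vecI index_zero_vec)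
  have "0 < (cmod (y $ j))\<^sup>2" using j by simp
  also have "\<dots> \<le> sq_norm_vec y"
    unfolding sq_norm_vec_def by (rule member_le_sum) (use j assms in auto)
  finally show ?thesis .
qed

lemma vnormN_adj_mult:
  assumes T: "T \<in> carrier_mat n n" and x: "x \<in> carrier_vec n"
  shows "vnormN (adj T * T) x = sqrt (sq_norm_vec (T *\<^sub>v x))"
proof -
  define y where "y = T *\<^sub>v x"
  have y: "y $ k = (\<Sum>i<n. T $$ (k,i) * x $ i)" if "k < n" for k
    unfolding y_def using T x that by (simp add: scalar_prod_def atLeast0LessThan)
  have "(adj T * T) *\<^sub>v x = adj T *\<^sub>v y"
    unfolding y_def by (rule assoc_mult_mat_vec) (use T x in auto)
  then have "(\<Sum>i<n. cnj (x $ i) * ((adj T * T) *\<^sub>v x) $ i) =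
             (\<Sum>i<n. \<Sum>k<n. cnj (x $ i) * (cnj (T $$ (k,i)) * y $ k))"
    using T unfolding y_def by (simp add: scalar_prod_def atLeast0LessThan sum_distrib_left)
  also have "\<dots> = (\<Sum>k<n. y $ k * cnj (y $ k))"
    by (subst sum.swap) (simp add: y sum_distrib_left mult.commute mult.left_commute)
  also have "\<dots> = complex_of_real (sq_norm_vec y)"
    unfolding sq_norm_vec_def y_def using T by (simp add: complex_norm_square del: of_real_power)
  finally show ?thesis
    unfolding vnormN_def y_def using x by simp
qed

lemma vnormN_one:
  assumes "y \<in> carrier_vec n"
  shows "vnormN (1\<^sub>m n) y = sqrt (sq_norm_vec y)"
  using vnormN_adj_mult[OF one_carrier_mat assms] assms by simp

lemma mnormN_similar:
  assumes sim: "similar_mat_wit E B Ti T" and E: "E \<in> carrier_mat n n"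
  shows "mnormN (adj T * T) E = mnormN (1\<^sub>m n) B"
proof -
  note wit = similar_mat_witD2[OF E sim]
  have TE: "T *\<^sub>v (E *\<^sub>v x) = B *\<^sub>v (T *\<^sub>v x)" if "x \<in> carrier_vec n" for x
  proof -
    have "T * E = T * Ti * (B * T)"
      unfolding wit(3) using wit(4-7) by (simp add: assoc_mult_mat[of _ n n _ n _ n])
    then have "T * E = B * T" using wit(2,4-7) by simp
    then show ?thesis using wit that by (metis assoc_mult_mat_vec)
  qed
  have ratio: "vnormN (adj T * T) (E *\<^sub>v x) / vnormN (adj T * T) x =
      vnormN (1\<^sub>m n) (B *\<^sub>v (T *\<^sub>v x)) / vnormN (1\<^sub>m n) (T *\<^sub>v x)"
    if "x \<in> carrier_vec n" for x
    using wit(5-7) E that by (simp add: vnormN_adj_mult vnormN_one TE)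
  have cancel: "T *\<^sub>v (Ti *\<^sub>v y) = y" "Ti *\<^sub>v (T *\<^sub>v y) = y" if "y \<in> carrier_vec n" for y
    using wit that by (simp_all add: assoc_mult_mat_vec[of _ n n _ n, symmetric])
  have "{vnormN (adj T * T) (E *\<^sub>v x) / vnormN (adj T * T) x | x.
           x \<in> carrier_vec n \<and> x \<noteq> 0\<^sub>v n} =
        {vnormN (1\<^sub>m n) (B *\<^sub>v y) / vnormN (1\<^sub>m n) y | y.
           y \<in> carrier_vec n \<and> y \<noteq> 0\<^sub>v n}"
  proof (intro equalityI subsetI; clarsimp)
    fix x :: "complex vec" assume x: "x \<in> carrier_vec n" "x \<noteq> 0\<^sub>v n"
    have "T *\<^sub>v x \<noteq> 0\<^sub>v n" using cancel(2)[OF x(1)] x wit by auto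
    then show "\<exists>y. vnormN (adj T * T) (E *\<^sub>v x) / vnormN (adj T * T) x =
                   vnormN (1\<^sub>m n) (B *\<^sub>v y) / vnormN (1\<^sub>m n) y \<and>
                   y \<in> carrier_vec n \<and> y \<noteq> 0\<^sub>v n"
      using ratio[OF x(1)] wit x by auto
  next
    fix y :: "complex vec" assume y: "y \<in> carrier_vec n" "y \<noteq> 0\<^sub>v n"
    have "Ti *\<^sub>v y \<noteq> 0\<^sub>v n" using cancel(1)[OF y(1)] y wit by auto
    then show "\<exists>x. vnormN (1\<^sub>m n) (B *\<^sub>v y) / vnormN (1\<^sub>m n) y =
                   vnormN (adj T * T) (E *\<^sub>v x) / vnormN (adj T * T) x \<and>
                   x \<in> carrier_vec n \<and> x \<noteq> 0\<^sub>v n"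
      using ratio[of "Ti *\<^sub>v y"] cancel(1)[OF y(1)] wit y by (intro exI[of _ "Ti *\<^sub>v y"]) auto
  qed
  then show ?thesis unfolding mnormN_def using wit E by simp
qed

lemma sq_norm_vec_diag_rect_mult:
  assumes "y \<in> carrier_vec n"
  shows "sq_norm_vec (diag_rect n n g *\<^sub>v y) = (\<Sum>i<n. (cmod (g i))\<^sup>2 * (cmod (y $ i))\<^sup>2)"
  unfolding sq_norm_vec_def
  by (rule sum.cong, simp, subst diag_rect_mult_vec_index[OF assms])
     (auto simp: norm_mult power_mult_distrib)

lemma sq_norm_vec_diag_rect_mult_le:
  assumes y: "y \<in> carrier_vec n" and le: "\<And>j. j < n \<Longrightarrow> cmod (g j) \<le> m"
  shows "sq_norm_vec (diag_rect n n g *\<^sub>v y) \<le> m\<^sup>2 * sq_norm_vec y"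
proof -
  have "sq_norm_vec (diag_rect n n g *\<^sub>v y) \<le> (\<Sum>i<n. m\<^sup>2 * (cmod (y $ i))\<^sup>2)"
    unfolding sq_norm_vec_diag_rect_mult[OF y] by (intro sum_mono mult_right_mono power_mono le) auto
  also have "\<dots> = m\<^sup>2 * sq_norm_vec y"
    unfolding sq_norm_vec_def using y by (simp add: sum_distrib_left)
  finally show ?thesis .
qed

lemma mnormN_one_diag_rect:
  assumes "0 < n"
  shows "mnormN (1\<^sub>m n) (diag_rect n n g) = Max ((\<lambda>j. cmod (g j)) ` {..<n})"
proof -
  define m where "m = Max ((\<lambda>j. cmod (g j)) ` {..<n})"
  have le: "cmod (g j) \<le> m" if "j < n" for j
    unfolding m_def using that by (intro Max_ge) auto
  have "m \<in> (\<lambda>j. cmod (g j)) ` {..<n}"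
    unfolding m_def using assms by (intro Max_in) auto
  then obtain j0 where j0: "j0 < n" "cmod (g j0) = m" by auto
  then have "0 \<le> m" by auto
  note vnormN_Gy = vnormN_one[OF mult_mat_vec_carrier[OF diag_rect_carrier]]
  have bound: "vnormN (1\<^sub>m n) (diag_rect n n g *\<^sub>v y) / vnormN (1\<^sub>m n) y \<le> m"
    if y: "y \<in> carrier_vec n" "y \<noteq> 0\<^sub>v n" for y
  proof -
    have "sqrt (sq_norm_vec (diag_rect n n g *\<^sub>v y)) \<le> sqrt (m\<^sup>2 * sq_norm_vec y)"
      using sq_norm_vec_diag_rect_mult_le[OF y(1) le] by simp
    also have "\<dots> = m * sqrt (sq_norm_vec y)"
      using \<open>0 \<le> m\<close> by (simp add: real_sqrt_mult)
    finally show ?thesis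
      using sq_norm_vec_pos[OF y] vnormN_one[OF y(1)] vnormN_Gy[OF y(1)] by (simp add: pos_divide_le_eq)
  qed
  have "sq_norm_vec (unit_vec n j0) = (\<Sum>i<n. if i = j0 then 1 else 0)"
    unfolding sq_norm_vec_def by (rule sum.cong) (use j0(1) in auto)
  moreover have
    "sq_norm_vec (diag_rect n n g *\<^sub>v unit_vec n j0) = (\<Sum>i<n. if i = j0 then m\<^sup>2 else 0)"
    unfolding sq_norm_vec_diag_rect_mult[OF unit_vec_carrier] by (rule sum.cong) (use j0 in auto)
  ultimately have attained:
    "vnormN (1\<^sub>m n) (diag_rect n n g *\<^sub>v unit_vec n j0) / vnormN (1\<^sub>m n) (unit_vec n j0) = m"
    using vnormN_one[OF unit_vec_carrier] vnormN_Gy[OF unit_vec_carrier] \<open>0 \<le> m\<close> j0(1) by simp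
  have "mnormN (1\<^sub>m n) (diag_rect n n g) =
        Sup {vnormN (1\<^sub>m n) (diag_rect n n g *\<^sub>v y) / vnormN (1\<^sub>m n) y | y.
             y \<in> carrier_vec n \<and> y \<noteq> 0\<^sub>v n}"
    unfolding mnormN_def by simp
  also have "\<dots> = m"
    using bound attained j0(1) by (intro cSup_eq_maximum) (auto intro!: exI[of _ "unit_vec n j0"])
  finally show ?thesis unfolding m_def .
qed

lemma similar_mat_wit_diag_rect_rescale:
  fixes E :: "'a :: field mat"
  assumes sim: "similar_mat_wit E (diag_rect n n g) V W" and u: "\<And>j. j < n \<Longrightarrow> u j \<noteq> 0"
  shows "similar_mat_wit E (diag_rect n n g) (V * diag_rect n n (\<lambda>j. 1 / u j)) (diag_rect n n u * W)"
proof -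
  have "E \<in> carrier_mat n n"
    by (rule similar_mat_wit_carrier[OF sim diag_rect_carrier])
  note wit = similar_mat_witD2[OF this sim]
  let ?U = "diag_rect n n u" and ?Ui = "diag_rect n n (\<lambda>j. 1 / u j)"
  have UUi: "?U * ?Ui = 1\<^sub>m n"
    unfolding diag_rect_mult one_mat_eq_diag_rect using u by (intro diag_rect_cong) auto
  have UiU: "?Ui * ?U = 1\<^sub>m n"
    unfolding diag_rect_mult one_mat_eq_diag_rect using u by (intro diag_rect_cong) auto
  have commute: "?Ui * diag_rect n n g * ?U = diag_rect n n g"
    unfolding diag_rect_mult using u by (intro diag_rect_cong) auto
  have "V * ?Ui * (?U * W) = V * (?Ui * ?U) * W"
    and "?U * W * (V * ?Ui) = ?U * (W * V) * ?Ui"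
    and "V * ?Ui * diag_rect n n g * (?U * W) = V * (?Ui * diag_rect n n g * ?U) * W"
    using carrier_matD[OF wit(6)] carrier_matD[OF wit(7)] by (simp_all add: assoc_mult_mat_dim)
  then show ?thesis
    unfolding UiU wit(2) commute using wit UUi by (intro similar_mat_witI[of _ _ n]) auto
qed

lemma mnormN_similar_diag_rect:
  assumes sim: "similar_mat_wit E (diag_rect n n g) V W" and u: "\<And>j. j < n \<Longrightarrow> u j \<noteq> 0"
    and "0 < n"
  shows "mnormN (adj (diag_rect n n u * W) * (diag_rect n n u * W)) E =
         Max ((\<lambda>j. cmod (g j)) ` {..<n})"
proof -
  have "E \<in> carrier_mat n n"
    by (rule similar_mat_wit_carrier[OF sim diag_rect_carrier])
  then show ?thesis
    using mnormN_similar[OF similar_mat_wit_diag_rect_rescale[OF sim u]]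
      mnormN_one_diag_rect[OF \<open>0 < n\<close>] by simp
qed

theorem theorem3p3:
  fixes n nc :: nat and A M Vr Vl Psh Rsh :: "complex mat"
    and lam u :: "nat \<Rightarrow> complex" and nu1 nu2 k :: nat
  assumes A: "A \<in> carrier_mat n n" and M: "M \<in> carrier_mat n n"
    and A_inv: "invertible_mat A" and M_inv: "invertible_mat M"
    and diag1: "diagonalizable (minv M * A)"
    and diag2: "diagonalizable (minv (adj M) * adj A)"
    and Vr: "Vr \<in> carrier_mat n n" and Vl: "Vl \<in> carrier_mat n n"
    and Vr_inv: "invertible_mat Vr" and Vl_inv: "invertible_mat Vl"
    and right: "A * Vr = M * Vr * dmat n lam"
    and left: "adj Vl * A = dmat n lam * adj Vl * M"
    and diagA: "diagonal_mat (adj Vl * A * Vr)"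
    and diagM: "diagonal_mat (adj Vl * M * Vr)"
    and order: "\<And>i j. i \<le> j \<Longrightarrow> j < n \<Longrightarrow> cmod (1 - lam j) \<le> cmod (1 - lam i)"
    and nc: "1 \<le> nc" "nc \<le> n"
    and Psh: "Psh \<in> carrier_mat n nc" and Rsh: "Rsh \<in> carrier_mat n nc"
    and Psh_range: "col_range Psh = span_first_cols Vr nc"
    and Rsh_range: "col_range Rsh = span_first_cols Vl nc"
    and u: "\<And>j. j < n \<Longrightarrow> u j \<noteq> 0"
    and k: "1 \<le> k"
  shows "let D = dmat n u;
             N = adj (minv Vr) * adj D * D * minv Vr;
             E = E_TG A M nu1 nu2 Psh Rsh;
             val = (if nc < n then cmod (1 - lam nc) ^ (nu1 + nu2) else 0)
         in spectral_radius E = root k (mnormN N (E ^\<^sub>m k))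
          \<and> root k (mnormN N (E ^\<^sub>m k)) = mnormN N E
          \<and> mnormN N E = val"
proof -
  note W = invertible_minv[OF Vr Vr_inv]
  define g where "g p j = (if j < nc then 0 else (1 - lam j) ^ p)" for p j
  define val where "val = (if nc < n then cmod (1 - lam nc) ^ (nu1 + nu2) else 0)"
  define N where "N = adj (minv Vr) * adj (dmat n u) * dmat n u * minv Vr"
  define E where "E = E_TG A M nu1 nu2 Psh Rsh"
  have n: "0 < n" using nc by simp
  have Max: "Max ((\<lambda>j. cmod (g p j)) ` {..<n}) = (if nc < n then cmod (1 - lam nc) ^ p else 0)" for p
    unfolding g_def by (rule Max_cmod_tail_powers[OF order n nc(2)])
  have N_eq: "N = adj (diag_rect n n u * minv Vr) * (diag_rect n n u * minv Vr)"
    unfolding N_def dmat_eq_diag_rect adj_mult[OF diag_rect_carrier W(1)]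
    using carrier_matD[OF W(1)] by (simp add: assoc_mult_mat_dim)
  have sim: "similar_mat_wit E (diag_rect n n (g (nu1 + nu2))) Vr (minv Vr)"
    unfolding E_def g_def
    by (rule similar_mat_wit_E_TG[OF A A_inv M M_inv Vr W Vl Vl_inv right diagA nc(2)
          Psh Psh_range Rsh Rsh_range])
  have "diag_rect n n (g (nu1 + nu2)) ^\<^sub>m k = diag_rect n n (g ((nu1 + nu2) * k))"
    unfolding diag_rect_pow g_def by (intro diag_rect_cong) (use k in \<open>simp add: power_mult\<close>)
  then have sim_pow: "similar_mat_wit (E ^\<^sub>m k) (diag_rect n n (g ((nu1 + nu2) * k))) Vr (minv Vr)"
    using similar_mat_wit_pow[OF sim] by metis
  have "spectral_radius E = val"
    using spectral_radius_similar_diag_rect[OF sim] Max unfolding val_def by simp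
  moreover have "mnormN N E = val"
    using mnormN_similar_diag_rect[OF sim u n] Max unfolding N_eq val_def by simp
  moreover have "mnormN N (E ^\<^sub>m k) = val ^ k"
    using mnormN_similar_diag_rect[OF sim_pow u n] Max k unfolding N_eq val_def by (simp add: power_mult)
  ultimately show ?thesis
    unfolding Let_def N_def[symmetric] E_def[symmetric] val_def[symmetric]
    using k by (simp add: real_root_power_cancel val_def)
qed

end
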